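(* Let $H$ be a locally compact abelian group, $X$ a compact metric space and $\sigma=(\sigma_1,\dots,\sigma_k)$ a $k$-tuple of pairwise commuting surjective local homeomorphisms of $X$. Give $A=C(X,H)$ the $\mathbb{N}^k$-module structure $(n f)(x)=f(\sigma^n(x))$. Then the map $\Phi:Z^1(\mathbb{N}^k,A)\to Z^1_{\mathrm{cont}}(\mathcal{G}(X,\sigma),H)$ sending a semigroup cocycle $c$ to the unique continuous groupoid $1$-cocycle $\Phi(c)$ with $\Phi(c)(x,\mathbf{e}_i,\sigma_i(x))=c(\mathbf{e}_i)(x)$ for all $i$ and $x$ (explicitly $\Phi(c)(x,m-n,y)=c(m)(x)-c(n)(y)$ whenever $\sigma^m(x)=\sigma^n(y)$) is a well-defined group isomorphism, it restricts to an isomorphism $B^1(\mathbb{N}^k,A)\cong B^1_{\mathrm{cont}}(\mathcal{G}(X,\sigma),H)$, and hence induces an isomorphism $H^1(\mathbb{N}^k,C(X,H))\cong H^1_{\mathrm{cont}}(\mathcal{G}(X,\sigma),H)$.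
   Context: For $n\in\mathbb{N}^k$, $\sigma^n=\sigma_1^{n_1}\circ\cdots\circ\sigma_k^{n_k}$. Semigroup cohomology: $Z^1(\mathbb{N}^k,A)=\{\gamma:\mathbb{N}^k\to A\mid \gamma(m+n)=\gamma(m)+m\gamma(n)\}$, $B^1(\mathbb{N}^k,A)=\{n\mapsto \alpha-n\alpha : \alpha\in A\}$, $H^1=Z^1/B^1$. The groupoid $\mathcal{G}(X,\sigma)=\{(x,p-q,y): p,q\in\mathbb{N}^k,\ \sigma^p(x)=\sigma^q(y)\}$ with $(x,m,y)(y,n,z)=(x,m+n,z)$, $r(x,n,y)=x$, $s(x,n,y)=y$, and topology with basis $U\times\{p-q\}\times V$ ($U,V$ open, $\sigma^p(U)=\sigma^q(V)$). $Z^1_{\mathrm{cont}}(\mathcal{G},H)$ is the group of continuous homomorphisms $\mathcal{G}\to H$; $B^1_{\mathrm{cont}}(\mathcal{G},H)$ consists of those of the form $\gamma\mapsto f(r(\gamma))-f(s(\gamma))$ with $f\in C(X,H)$; $H^1_{\mathrm{cont}}=Z^1_{\mathrm{cont}}/B^1_{\mathrm{cont}}$. *)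

theory Defs
  imports "HOL-Analysis.Analysis" "HOL-Library.Function_Algebras" "HOL-Algebra.Coset"
begin

text \<open>Elements of N^k are represented as functions nat => nat vanishing
  at all indices >= k; elements of Z^k as functions nat => int vanishing
  at all indices >= k.\<close>

definition Nk :: "nat \<Rightarrow> (nat \<Rightarrow> nat) set" where
  "Nk k = {n. \<forall>i\<ge>k. n i = 0}"

definition unitvec :: "nat \<Rightarrow> (nat \<Rightarrow> nat)" where
  "unitvec i = (\<lambda>j. if j = i then 1 else 0)"

definition zdiff :: "(nat \<Rightarrow> nat) \<Rightarrow> (nat \<Rightarrow> nat) \<Rightarrow> (nat \<Rightarrow> int)" where
  "zdiff p q = (\<lambda>i. int (p i) - int (q i))"

fun spow :: "(nat \<Rightarrow> 'x \<Rightarrow> 'x) \<Rightarrow> nat \<Rightarrow> (nat \<Rightarrow> nat) \<Rightarrow> 'x \<Rightarrow> 'x" where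
  "spow \<sigma> 0 n = id"
| "spow \<sigma> (Suc j) n = spow \<sigma> j n \<circ> (\<sigma> j ^^ n j)"

definition local_homeo :: "('x::topological_space \<Rightarrow> 'x) \<Rightarrow> bool" where
  "local_homeo f \<longleftrightarrow> continuous_on UNIV f \<and>
     (\<forall>x. \<exists>U g. open U \<and> x \<in> U \<and> open (f ` U) \<and> homeomorphism U (f ` U) f g)"

text \<open>Module action (n f)(x) = f (sigma^n x). Cochains are extensional:
  they vanish (as the zero function) outside N^k.\<close>

definition sgZ1 :: "(nat \<Rightarrow> 'x::topological_space \<Rightarrow> 'x) \<Rightarrow> nat
    \<Rightarrow> ((nat \<Rightarrow> nat) \<Rightarrow> 'x \<Rightarrow> 'h::{topological_space,ab_group_add}) set" where
  "sgZ1 \<sigma> k = {\<gamma>. (\<forall>n\<in>Nk k. continuous_on UNIV (\<gamma> n))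
      \<and> (\<forall>m\<in>Nk k. \<forall>n\<in>Nk k. \<gamma> (m + n) = (\<lambda>x. \<gamma> m x + \<gamma> n (spow \<sigma> k m x)))
      \<and> (\<forall>n. n \<notin> Nk k \<longrightarrow> \<gamma> n = (\<lambda>x. 0))}"

definition sgB1 :: "(nat \<Rightarrow> 'x::topological_space \<Rightarrow> 'x) \<Rightarrow> nat
    \<Rightarrow> ((nat \<Rightarrow> nat) \<Rightarrow> 'x \<Rightarrow> 'h::{topological_space,ab_group_add}) set" where
  "sgB1 \<sigma> k = {(\<lambda>n. if n \<in> Nk k then (\<lambda>x. \<alpha> x - \<alpha> (spow \<sigma> k n x)) else (\<lambda>x. 0))
      | \<alpha>. continuous_on UNIV \<alpha>}"

definition sgZ1_grp :: "(nat \<Rightarrow> 'x::topological_space \<Rightarrow> 'x) \<Rightarrow> nat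
    \<Rightarrow> ((nat \<Rightarrow> nat) \<Rightarrow> 'x \<Rightarrow> 'h::{topological_space,ab_group_add}) monoid" where
  "sgZ1_grp \<sigma> k = \<lparr>carrier = sgZ1 \<sigma> k,
      mult = (\<lambda>c d. \<lambda>n x. c n x + d n x), one = (\<lambda>n x. 0)\<rparr>"

definition grpd :: "(nat \<Rightarrow> 'x \<Rightarrow> 'x) \<Rightarrow> nat \<Rightarrow> ('x \<times> (nat \<Rightarrow> int) \<times> 'x) set" where
  "grpd \<sigma> k = {(x, g, y). \<exists>p\<in>Nk k. \<exists>q\<in>Nk k. g = zdiff p q \<and> spow \<sigma> k p x = spow \<sigma> k q y}"

definition grpd_basis :: "(nat \<Rightarrow> 'x::topological_space \<Rightarrow> 'x) \<Rightarrow> nat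
    \<Rightarrow> ('x \<times> (nat \<Rightarrow> int) \<times> 'x) set set" where
  "grpd_basis \<sigma> k = {{(x, zdiff p q, y) | x y. x \<in> U \<and> y \<in> V \<and> spow \<sigma> k p x = spow \<sigma> k q y}
      | U V p q. open U \<and> open V \<and> p \<in> Nk k \<and> q \<in> Nk k}"

definition grpd_open :: "(nat \<Rightarrow> 'x::topological_space \<Rightarrow> 'x) \<Rightarrow> nat
    \<Rightarrow> ('x \<times> (nat \<Rightarrow> int) \<times> 'x) set \<Rightarrow> bool" where
  "grpd_open \<sigma> k = generate_topology (grpd_basis \<sigma> k)"

text \<open>Continuous groupoid homomorphisms G -> H (extensional: 0 outside G).\<close>
definition grpdZ1 :: "(nat \<Rightarrow> 'x::topological_space \<Rightarrow> 'x) \<Rightarrow> nat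
    \<Rightarrow> ('x \<times> (nat \<Rightarrow> int) \<times> 'x \<Rightarrow> 'h::{topological_space,ab_group_add}) set" where
  "grpdZ1 \<sigma> k = {\<phi>.
      (\<forall>W. open W \<longrightarrow> grpd_open \<sigma> k (grpd \<sigma> k \<inter> \<phi> -` W))
    \<and> (\<forall>x m y n z. (x, m, y) \<in> grpd \<sigma> k \<longrightarrow> (y, n, z) \<in> grpd \<sigma> k \<longrightarrow>
          \<phi> (x, m + n, z) = \<phi> (x, m, y) + \<phi> (y, n, z))
    \<and> (\<forall>g. g \<notin> grpd \<sigma> k \<longrightarrow> \<phi> g = 0)}"

definition grpdB1 :: "(nat \<Rightarrow> 'x::topological_space \<Rightarrow> 'x) \<Rightarrow> nat
    \<Rightarrow> ('x \<times> (nat \<Rightarrow> int) \<times> 'x \<Rightarrow> 'h::{topological_space,ab_group_add}) set" where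
  "grpdB1 \<sigma> k = {(\<lambda>(x, g, y). if (x, g, y) \<in> grpd \<sigma> k then f x - f y else 0)
      | f. continuous_on UNIV f}"

definition grpdZ1_grp :: "(nat \<Rightarrow> 'x::topological_space \<Rightarrow> 'x) \<Rightarrow> nat
    \<Rightarrow> ('x \<times> (nat \<Rightarrow> int) \<times> 'x \<Rightarrow> 'h::{topological_space,ab_group_add}) monoid" where
  "grpdZ1_grp \<sigma> k = \<lparr>carrier = grpdZ1 \<sigma> k,
      mult = (\<lambda>\<phi> \<psi>. \<lambda>g. \<phi> g + \<psi> g), one = (\<lambda>g. 0)\<rparr>"

text \<open>Phi(c)(x, m - n, y) = c(m)(x) - c(n)(y) for a chosen representation
  with sigma^m x = sigma^n y; independence of the choice is part of the theorem.\<close>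
definition Phi :: "(nat \<Rightarrow> 'x \<Rightarrow> 'x) \<Rightarrow> nat \<Rightarrow> ((nat \<Rightarrow> nat) \<Rightarrow> 'x \<Rightarrow> 'h::ab_group_add)
    \<Rightarrow> ('x \<times> (nat \<Rightarrow> int) \<times> 'x \<Rightarrow> 'h)" where
  "Phi \<sigma> k c = (\<lambda>(x, g, y). if (x, g, y) \<in> grpd \<sigma> k then
      (let (m, n) = (SOME (m, n). m \<in> Nk k \<and> n \<in> Nk k \<and> g = zdiff m n
                       \<and> spow \<sigma> k m x = spow \<sigma> k n y)
       in c m x - c n y) else 0)"

end

theory Submission
  imports Defs
begin

(* A groupoid cocycle phi is determined by its values phi(x, m, sigma^m x) on the "positive" arrows,
  and these values form a semigroup cocycle c(m)(x) = phi(x, m, sigma^m x): the cocycle identity of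
  c is the multiplicativity of phi along (x, m, sigma^m x)(sigma^m x, n, sigma^(m+n) x).
  Conversely, c(m)(x) - c(n)(y) does not depend on the representation (m, n) of an arrow
  (x, m - n, y), because adding the same p to m and n changes both terms by c(p)(sigma^m x)
  = c(p)(sigma^n y); multiplicativity follows the same way, and continuity holds since
  the formula is continuous on each basic open set.  The two constructions are mutually
  inverse and additive, and coboundaries alpha - alpha o sigma^n correspond to f(x) - f(y). *)

lemma funpow_commute_funpow:
  assumes "\<And>x. f (g x) = g (f x)"
  shows "(f ^^ a) ((g ^^ b) x) = (g ^^ b) ((f ^^ a) x)"
proof -
  have fg: "(f ^^ a) (g x) = g ((f ^^ a) x)" for x
    using assms by (induction a arbitrary: x) auto
  show ?thesis
    by (induction b arbitrary: x) (simp_all add: fg)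
qed

lemma continuous_on_funpow:
  fixes f :: "'a::topological_space \<Rightarrow> 'a"
  assumes "continuous_on UNIV f"
  shows "continuous_on UNIV (f ^^ n)"
proof (induction n)
  case (Suc n)
  have "continuous_on UNIV (f \<circ> f ^^ n)"
    by (rule continuous_on_compose[OF Suc.IH continuous_on_subset[OF assms]]) simp
  then show ?case by simp
qed (simp add: continuous_on_id)


subsection \<open>The semigroup N^k\<close>

lemma Nk_add: "m \<in> Nk k \<Longrightarrow> n \<in> Nk k \<Longrightarrow> m + n \<in> Nk k"
  by (simp add: Nk_def)

lemma zero_in_Nk [simp]: "0 \<in> Nk k"
  by (simp add: Nk_def)

lemma unitvec_in_Nk: "i < k \<Longrightarrow> unitvec i \<in> Nk k"
  by (simp add: Nk_def unitvec_def)

lemma zdiff_add: "zdiff m n + zdiff p q = zdiff (m + p) (n + q)"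
  by (simp add: zdiff_def fun_eq_iff)

lemma zdiff_eq_iff: "zdiff m n = zdiff p q \<longleftrightarrow> m + q = p + n"
proof -
  have "int (m i) - int (n i) = int (p i) - int (q i) \<longleftrightarrow> m i + q i = p i + n i" for i
    by presburger
  then show ?thesis
    by (simp add: zdiff_def fun_eq_iff)
qed

lemma zdiff_self: "zdiff n n = 0"
  by (simp add: zdiff_def fun_eq_iff)

lemma Nk_induct [consumes 1, case_names zero step]:
  assumes "m \<in> Nk k" and "P 0"
    and "\<And>m i. m \<in> Nk k \<Longrightarrow> i < k \<Longrightarrow> P m \<Longrightarrow> P (m + unitvec i)"
  shows "P m"
proof -
  have "m \<in> Nk k \<Longrightarrow> sum m {..<k} = s \<Longrightarrow> P m" for s m
  proof (induction s arbitrary: m)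
    case 0
    then have "m = 0"
      by (auto simp: Nk_def fun_eq_iff) (metis lessThan_iff not_le)
    with assms(2) show ?case by (simp only:)
  next
    case (Suc s)
    then obtain i where i: "i < k" "m i > 0"
      by (metis lessThan_iff neq0_conv sum.neutral nat.distinct(1))
    define m' where "m' = m(i := m i - 1)"
    have m: "m = m' + unitvec i"
      using i by (auto simp: m'_def unitvec_def fun_eq_iff)
    have m': "m' \<in> Nk k"
      using Suc.prems i by (auto simp: m'_def Nk_def)
    have "sum m {..<k} = sum m' {..<k} + 1"
      using i by (subst m) (simp add: sum.distrib unitvec_def)
    with Suc m' have "P m'" by simp
    with assms(3) m' i m show ?case by (simp only:)
  qed
  with assms(1) show ?thesis by blast
qed

lemma spow_zero [simp]: "spow \<sigma> j 0 x = x"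
  by (induction j arbitrary: x) auto

lemma spow_unitvec: "spow \<sigma> j (unitvec i) x = (if i < j then \<sigma> i x else x)"
  by (induction j arbitrary: x) (auto simp: unitvec_def less_Suc_eq)

lemma continuous_on_spow:
  assumes "\<And>i. i < j \<Longrightarrow> continuous_on UNIV (\<sigma> i)"
  shows "continuous_on UNIV (spow \<sigma> j n)"
  using assms
proof (induction j)
  case (Suc j)
  then show ?case
    using continuous_on_compose2[OF Suc.IH continuous_on_funpow[of "\<sigma> j" "n j"]]
    by (simp add: comp_def)
qed (simp add: continuous_on_id)

locale commuting_maps =
  fixes \<sigma> :: "nat \<Rightarrow> 'x::topological_space \<Rightarrow> 'x" and k :: nat
  assumes commute: "\<And>i j. i < k \<Longrightarrow> j < k \<Longrightarrow> \<sigma> i \<circ> \<sigma> j = \<sigma> j \<circ> \<sigma> i"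
    and continuous: "\<And>i. i < k \<Longrightarrow> continuous_on UNIV (\<sigma> i)"
begin

lemma spow_commute_funpow:
  assumes "j \<le> k" "i < k"
  shows "spow \<sigma> j n ((\<sigma> i ^^ a) x) = (\<sigma> i ^^ a) (spow \<sigma> j n x)"
  using assms
proof (induction j arbitrary: x)
  case (Suc j)
  have "(\<sigma> j ^^ n j) ((\<sigma> i ^^ a) x) = (\<sigma> i ^^ a) ((\<sigma> j ^^ n j) x)"
    using Suc.prems commute[of j i] by (intro funpow_commute_funpow) (auto simp: fun_eq_iff)
  with Suc show ?case by simp
qed simp

lemma spow_add: "spow \<sigma> k (m + n) x = spow \<sigma> k m (spow \<sigma> k n x)"
proof -
  have "spow \<sigma> j (m + n) x = spow \<sigma> j m (spow \<sigma> j n x)" if "j \<le> k" for j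
    using that
  proof (induction j arbitrary: x)
    case (Suc j)
    then show ?case
      by (simp add: funpow_add plus_fun_def spow_commute_funpow)
  qed simp
  then show ?thesis by simp
qed

lemma spow_add': "spow \<sigma> k (m + n) x = spow \<sigma> k n (spow \<sigma> k m x)"
  by (metis add.commute spow_add)

lemma continuous_on_spow_k: "continuous_on UNIV (spow \<sigma> k n)"
  using continuous by (rule continuous_on_spow)

end


subsection \<open>Semigroup cocycles\<close>

lemma sgZ1_cocycle:
  "c \<in> sgZ1 \<sigma> k \<Longrightarrow> m \<in> Nk k \<Longrightarrow> n \<in> Nk k \<Longrightarrow> c (m + n) x = c m x + c n (spow \<sigma> k m x)"
  unfolding sgZ1_def by (auto dest!: fun_cong)

lemma sgZ1_outside: "c \<in> sgZ1 \<sigma> k \<Longrightarrow> m \<notin> Nk k \<Longrightarrow> c m = (\<lambda>x. 0)"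
  unfolding sgZ1_def by auto

lemma sgZ1_continuous: "c \<in> sgZ1 \<sigma> k \<Longrightarrow> m \<in> Nk k \<Longrightarrow> continuous_on UNIV (c m)"
  unfolding sgZ1_def by auto

lemma sgZ1_zero: "c \<in> sgZ1 \<sigma> k \<Longrightarrow> c 0 x = 0"
  using sgZ1_cocycle[of c \<sigma> k 0 0 x] by simp

lemma sgZ1_shift:
  assumes c: "c \<in> sgZ1 \<sigma> k" and "m \<in> Nk k" "n \<in> Nk k" "p \<in> Nk k"
    and eq: "spow \<sigma> k m x = spow \<sigma> k n y"
  shows "c (m + p) x - c (n + p) y = c m x - c n y"
  using sgZ1_cocycle[OF c \<open>m \<in> Nk k\<close> \<open>p \<in> Nk k\<close>, of x]
    sgZ1_cocycle[OF c \<open>n \<in> Nk k\<close> \<open>p \<in> Nk k\<close>, of y] eq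
  by simp

lemma sgZ1_diff_eq:
  assumes c: "c \<in> sgZ1 \<sigma> k" and N: "m \<in> Nk k" "n \<in> Nk k" "m' \<in> Nk k" "n' \<in> Nk k"
    and z: "zdiff m n = zdiff m' n'"
    and e: "spow \<sigma> k m x = spow \<sigma> k n y" and e': "spow \<sigma> k m' x = spow \<sigma> k n' y"
  shows "c m x - c n y = c m' x - c n' y"
proof -
  have "c m x - c n y = c (m + n') x - c (n + n') y"
    using sgZ1_shift[OF c N(1,2,4) e] by simp
  also have "\<dots> = c (m' + n) x - c (n' + n) y"
    using z by (simp add: zdiff_eq_iff add.commute)
  also have "\<dots> = c m' x - c n' y"
    using sgZ1_shift[OF c N(3,4,2) e'] .
  finally show ?thesis .
qed

lemma sgZ1_eq_if_eq_on_unitvec: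
  assumes c: "c \<in> sgZ1 \<sigma> k" and d: "d \<in> sgZ1 \<sigma> k"
    and unit: "\<And>i. i < k \<Longrightarrow> c (unitvec i) = d (unitvec i)"
  shows "c = d"
proof (intro ext)
  fix m x
  show "c m x = d m x"
  proof (cases "m \<in> Nk k")
    case True
    then have "\<forall>x. c m x = d m x"
    proof (induction rule: Nk_induct)
      case zero
      show ?case using sgZ1_zero[OF c] sgZ1_zero[OF d] by metis
    next
      case (step m i)
      have "unitvec i \<in> Nk k"
        using step(2) by (rule unitvec_in_Nk)
      then show ?case
        using step(3) unit[OF step(2)]
        by (simp only: sgZ1_cocycle[OF c step(1)] sgZ1_cocycle[OF d step(1)]) simp
    qed
    then show ?thesis ..
  qed (simp add: sgZ1_outside[OF c] sgZ1_outside[OF d])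
qed

lemma sgZ1_add:
  fixes c d :: "(nat \<Rightarrow> nat) \<Rightarrow> 'x::topological_space \<Rightarrow> 'h::topological_ab_group_add"
  assumes "c \<in> sgZ1 \<sigma> k" and "d \<in> sgZ1 \<sigma> k"
  shows "(\<lambda>n x. c n x + d n x) \<in> sgZ1 \<sigma> k"
  using assms unfolding sgZ1_def
  by (auto intro!: continuous_on_add simp: fun_eq_iff algebra_simps)

lemma zero_in_sgZ1: "(\<lambda>n x. 0) \<in> sgZ1 \<sigma> k"
  unfolding sgZ1_def by auto

lemma monoid_sgZ1_grp:
  "monoid (sgZ1_grp \<sigma> k :: ((nat \<Rightarrow> nat) \<Rightarrow> 'x::topological_space \<Rightarrow> 'h::topological_ab_group_add) monoid)"
  unfolding sgZ1_grp_def
  by (rule monoidI) (auto simp: sgZ1_add zero_in_sgZ1 add.assoc)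


subsection \<open>Groupoid cocycles\<close>

lemma grpdI:
  "p \<in> Nk k \<Longrightarrow> q \<in> Nk k \<Longrightarrow> spow \<sigma> k p x = spow \<sigma> k q y \<Longrightarrow> (x, zdiff p q, y) \<in> grpd \<sigma> k"
  unfolding grpd_def by auto

lemma grpd_positiveI: "m \<in> Nk k \<Longrightarrow> (x, zdiff m 0, spow \<sigma> k m x) \<in> grpd \<sigma> k"
  by (rule grpdI) simp_all

lemma grpdE:
  assumes "(x, g, y) \<in> grpd \<sigma> k"
  obtains p q where "p \<in> Nk k" "q \<in> Nk k" "g = zdiff p q" "spow \<sigma> k p x = spow \<sigma> k q y"
  using assms unfolding grpd_def by auto

lemma grpdZ1_mult:
  "\<phi> \<in> grpdZ1 \<sigma> k \<Longrightarrow> (x, m, y) \<in> grpd \<sigma> k \<Longrightarrow> (y, n, z) \<in> grpd \<sigma> k \<Longrightarrow>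
    \<phi> (x, m + n, z) = \<phi> (x, m, y) + \<phi> (y, n, z)"
  unfolding grpdZ1_def by blast

lemma grpdZ1_outside: "\<phi> \<in> grpdZ1 \<sigma> k \<Longrightarrow> g \<notin> grpd \<sigma> k \<Longrightarrow> \<phi> g = 0"
  unfolding grpdZ1_def by blast

lemma grpdZ1_open_vimage:
  "\<phi> \<in> grpdZ1 \<sigma> k \<Longrightarrow> open W \<Longrightarrow> grpd_open \<sigma> k (grpd \<sigma> k \<inter> \<phi> -` W)"
  unfolding grpdZ1_def by blast

lemma grpdZ1_unit:
  assumes "\<phi> \<in> grpdZ1 \<sigma> k"
  shows "\<phi> (y, 0, y) = 0"
proof -
  have g: "(y, 0, y) \<in> grpd \<sigma> k"
    using grpdI[of 0 k 0 \<sigma> y y] by (simp add: zdiff_self)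
  show ?thesis
    using grpdZ1_mult[OF assms g g] by simp
qed

lemma grpdZ1_diff:
  assumes \<phi>: "\<phi> \<in> grpdZ1 \<sigma> k" and m: "m \<in> Nk k" and n: "n \<in> Nk k"
    and eq: "spow \<sigma> k m x = spow \<sigma> k n y"
  shows "\<phi> (x, zdiff m n, y) = \<phi> (x, zdiff m 0, spow \<sigma> k m x) - \<phi> (y, zdiff n 0, spow \<sigma> k n y)"
proof -
  have back_arrow: "(spow \<sigma> k n y, zdiff 0 n, y) \<in> grpd \<sigma> k"
    by (rule grpdI) (simp_all add: n)
  have "\<phi> (spow \<sigma> k n y, zdiff 0 n, y) + \<phi> (y, zdiff n 0, spow \<sigma> k n y)
      = \<phi> (spow \<sigma> k n y, zdiff 0 n + zdiff n 0, spow \<sigma> k n y)"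
    using grpdZ1_mult[OF \<phi> back_arrow grpd_positiveI[OF n]] by simp
  also have "\<dots> = 0"
    by (simp add: zdiff_add zdiff_self grpdZ1_unit[OF \<phi>])
  finally have inv_eq: "\<phi> (spow \<sigma> k n y, zdiff 0 n, y) = - \<phi> (y, zdiff n 0, spow \<sigma> k n y)"
    by (simp add: eq_neg_iff_add_eq_0)
  have forward_arrow: "(spow \<sigma> k m x, zdiff 0 n, y) \<in> grpd \<sigma> k"
    using back_arrow eq by simp
  have "\<phi> (x, zdiff m 0 + zdiff 0 n, y) = \<phi> (x, zdiff m 0, spow \<sigma> k m x) + \<phi> (spow \<sigma> k m x, zdiff 0 n, y)"
    by (rule grpdZ1_mult[OF \<phi> grpd_positiveI[OF m] forward_arrow])
  then have "\<phi> (x, zdiff m n, y) = \<phi> (x, zdiff m 0, spow \<sigma> k m x) + \<phi> (spow \<sigma> k n y, zdiff 0 n, y)"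
    using eq by (simp add: zdiff_add)
  with inv_eq show ?thesis by simp
qed


subsection \<open>The map Phi\<close>

lemma Phi_eq:
  assumes c: "c \<in> sgZ1 \<sigma> k" and N: "m \<in> Nk k" "n \<in> Nk k"
    and e: "spow \<sigma> k m x = spow \<sigma> k n y"
  shows "Phi \<sigma> k c (x, zdiff m n, y) = c m x - c n y"
proof -
  let ?P = "\<lambda>(m', n'). m' \<in> Nk k \<and> n' \<in> Nk k \<and> zdiff m n = zdiff m' n'
                       \<and> spow \<sigma> k m' x = spow \<sigma> k n' y"
  obtain m' n' where mn: "(SOME p. ?P p) = (m', n')"
    by (cases "SOME p. ?P p") auto
  have "\<exists>p. ?P p"
    using N e by (intro exI[of _ "(m, n)"]) simp
  from someI_ex[OF this] mn have "?P (m', n')"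
    by simp
  then have "c m' x - c n' y = c m x - c n y"
    using sgZ1_diff_eq[OF c, of m' n' m n x y] N e by simp
  with mn show ?thesis
    using grpdI[OF N e] unfolding Phi_def by simp
qed

lemma Phi_outside: "g \<notin> grpd \<sigma> k \<Longrightarrow> Phi \<sigma> k c g = 0"
  unfolding Phi_def by (cases g) auto

lemma Phi_positive: "c \<in> sgZ1 \<sigma> k \<Longrightarrow> m \<in> Nk k \<Longrightarrow> Phi \<sigma> k c (x, zdiff m 0, spow \<sigma> k m x) = c m x"
  using Phi_eq[of c \<sigma> k m 0 x "spow \<sigma> k m x"] by (simp add: sgZ1_zero)

lemma Phi_unitvec: "c \<in> sgZ1 \<sigma> k \<Longrightarrow> i < k \<Longrightarrow> Phi \<sigma> k c (x, zdiff (unitvec i) 0, \<sigma> i x) = c (unitvec i) x"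
  using Phi_positive[of c \<sigma> k "unitvec i" x] by (simp add: unitvec_in_Nk spow_unitvec)

lemma Phi_add:
  fixes c d :: "(nat \<Rightarrow> nat) \<Rightarrow> 'x::topological_space \<Rightarrow> 'h::topological_ab_group_add"
  assumes c: "c \<in> sgZ1 \<sigma> k" and d: "d \<in> sgZ1 \<sigma> k"
  shows "Phi \<sigma> k (\<lambda>n x. c n x + d n x) = (\<lambda>g. Phi \<sigma> k c g + Phi \<sigma> k d g)"
proof
  fix t :: "'x \<times> (nat \<Rightarrow> int) \<times> 'x"
  obtain x g y where t: "t = (x, g, y)" by (cases t)
  show "Phi \<sigma> k (\<lambda>n x. c n x + d n x) t = Phi \<sigma> k c t + Phi \<sigma> k d t"
  proof (cases "t \<in> grpd \<sigma> k")
    case True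
    then obtain m n where mn: "m \<in> Nk k" "n \<in> Nk k" "g = zdiff m n" "spow \<sigma> k m x = spow \<sigma> k n y"
      using t by (auto elim: grpdE)
    show ?thesis
      unfolding t mn(3) Phi_eq[OF c mn(1,2,4)] Phi_eq[OF d mn(1,2,4)]
        Phi_eq[OF sgZ1_add[OF c d] mn(1,2,4)]
      by simp
  qed (simp add: Phi_outside)
qed

lemma Phi_continuous:
  fixes c :: "(nat \<Rightarrow> nat) \<Rightarrow> 'x::topological_space \<Rightarrow> 'h::topological_ab_group_add"
  assumes c: "c \<in> sgZ1 \<sigma> k" and W: "open W"
  shows "grpd_open \<sigma> k (grpd \<sigma> k \<inter> Phi \<sigma> k c -` W)"
proof -
  let ?S = "grpd \<sigma> k \<inter> Phi \<sigma> k c -` W"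
  let ?K = "{B \<in> grpd_basis \<sigma> k. B \<subseteq> ?S}"
  have "?S \<subseteq> \<Union>?K"
  proof
    fix t assume t: "t \<in> ?S"
    obtain x g y where txy: "t = (x, g, y)" by (cases t)
    with t have "(x, g, y) \<in> grpd \<sigma> k" by simp
    then obtain p q where "p \<in> Nk k" "q \<in> Nk k" "g = zdiff p q" "spow \<sigma> k p x = spow \<sigma> k q y"
      by (rule grpdE)
    with txy have pq: "t = (x, zdiff p q, y)" "p \<in> Nk k" "q \<in> Nk k" "spow \<sigma> k p x = spow \<sigma> k q y"
      by simp_all
    let ?f = "\<lambda>z. c p (fst z) - c q (snd z)"
    have "continuous_on UNIV ?f"
      by (intro continuous_on_diff
          continuous_on_compose2[OF sgZ1_continuous[OF c pq(2)] continuous_on_fst[OF continuous_on_id]]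
          continuous_on_compose2[OF sgZ1_continuous[OF c pq(3)] continuous_on_snd[OF continuous_on_id]])
        auto
    then have "open (?f -` W)"
      using W by (simp add: continuous_on_open_vimage)
    moreover have "(x, y) \<in> ?f -` W"
      using t pq Phi_eq[OF c pq(2,3,4)] by simp
    ultimately obtain U V where UV: "open U" "open V" "(x, y) \<in> U \<times> V" "U \<times> V \<subseteq> ?f -` W"
      by (rule open_prod_elim)
    let ?B = "{(x', zdiff p q, y') | x' y'. x' \<in> U \<and> y' \<in> V \<and> spow \<sigma> k p x' = spow \<sigma> k q y'}"
    have "?B \<in> grpd_basis \<sigma> k"
      unfolding grpd_basis_def using UV pq by blast
    moreover have "?B \<subseteq> ?S"
      using UV pq Phi_eq[OF c pq(2,3)] grpdI[OF pq(2,3)] by auto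
    moreover have "t \<in> ?B"
      using pq UV by blast
    ultimately show "t \<in> \<Union>?K" by blast
  qed
  then have "?S = \<Union>?K" by blast
  then show ?thesis
    unfolding grpd_open_def by (auto intro: generate_topology.UN generate_topology.Basis)
qed

context commuting_maps
begin

lemma Phi_mult:
  assumes c: "c \<in> sgZ1 \<sigma> k" and g: "(x, g, y) \<in> grpd \<sigma> k" and h: "(y, h, z) \<in> grpd \<sigma> k"
  shows "Phi \<sigma> k c (x, g + h, z) = Phi \<sigma> k c (x, g, y) + Phi \<sigma> k c (y, h, z)"
proof -
  obtain p q where pq: "p \<in> Nk k" "q \<in> Nk k" "g = zdiff p q" "spow \<sigma> k p x = spow \<sigma> k q y"
    using g by (rule grpdE)
  obtain r s where rs: "r \<in> Nk k" "s \<in> Nk k" "h = zdiff r s" "spow \<sigma> k r y = spow \<sigma> k s z"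
    using h by (rule grpdE)
  have e1: "spow \<sigma> k (p + r) x = spow \<sigma> k (q + r) y"
    using pq(4) by (simp add: spow_add')
  have e2: "spow \<sigma> k (q + r) y = spow \<sigma> k (q + s) z"
    using rs(4) by (simp add: spow_add)
  have "Phi \<sigma> k c (x, g, y) = c (p + r) x - c (q + r) y"
    using Phi_eq[OF c pq(1,2,4)] sgZ1_shift[OF c pq(1,2) rs(1) pq(4)] pq(3) by simp
  moreover have "Phi \<sigma> k c (y, h, z) = c (q + r) y - c (q + s) z"
    using Phi_eq[OF c rs(1,2,4)] sgZ1_shift[OF c rs(1,2) pq(2) rs(4)] rs(3)
    by (simp add: add.commute)
  moreover have "Phi \<sigma> k c (x, g + h, z) = c (p + r) x - c (q + s) z"
    using Phi_eq[OF c Nk_add[OF pq(1) rs(1)] Nk_add[OF pq(2) rs(2)]] e1 e2 pq(3) rs(3)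
    by (simp add: zdiff_add)
  ultimately show ?thesis by simp
qed

lemma Phi_in_grpdZ1:
  fixes c :: "(nat \<Rightarrow> nat) \<Rightarrow> 'x \<Rightarrow> 'h::topological_ab_group_add"
  assumes "c \<in> sgZ1 \<sigma> k"
  shows "Phi \<sigma> k c \<in> grpdZ1 \<sigma> k"
  unfolding grpdZ1_def
proof (intro CollectI conjI allI impI)
  show "grpd_open \<sigma> k (grpd \<sigma> k \<inter> Phi \<sigma> k c -` W)" if "open W" for W :: "'h set"
    using assms that by (rule Phi_continuous)
  show "Phi \<sigma> k c (x, m + n, z) = Phi \<sigma> k c (x, m, y) + Phi \<sigma> k c (y, n, z)"
    if "(x, m, y) \<in> grpd \<sigma> k" "(y, n, z) \<in> grpd \<sigma> k" for x m y n z
    using assms that by (rule Phi_mult)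
qed (rule Phi_outside)

end

definition sg_cocycle_of ::
    "(nat \<Rightarrow> 'x \<Rightarrow> 'x) \<Rightarrow> nat \<Rightarrow> ('x \<times> (nat \<Rightarrow> int) \<times> 'x \<Rightarrow> 'h::zero) \<Rightarrow> (nat \<Rightarrow> nat) \<Rightarrow> 'x \<Rightarrow> 'h"
  where "sg_cocycle_of \<sigma> k \<phi> = (\<lambda>m. if m \<in> Nk k then (\<lambda>x. \<phi> (x, zdiff m 0, spow \<sigma> k m x)) else (\<lambda>x. 0))"

lemma sg_cocycle_of_Phi:
  assumes "c \<in> sgZ1 \<sigma> k"
  shows "sg_cocycle_of \<sigma> k (Phi \<sigma> k c) = c"
  using assms by (auto simp: sg_cocycle_of_def fun_eq_iff Phi_positive sgZ1_outside)

context commuting_maps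
begin

lemma open_positive_slice:
  assumes "grpd_open \<sigma> k S" and m: "m \<in> Nk k"
  shows "open {x. (x, zdiff m 0, spow \<sigma> k m x) \<in> S}"
proof -
  \<comment> \<open>Abstracting the label keeps the induction from exposing the zero function as \<open>\<lambda>a. 0\<close>.\<close>
  define d where "d = zdiff m 0"
  have "open {x. (x, d, spow \<sigma> k m x) \<in> S}"
    using assms(1) unfolding grpd_open_def
  proof (induction rule: generate_topology.induct)
    case (Int a b)
    then show ?case
      by (simp add: Collect_conj_eq open_Int)
  next
    case (UN K)
    then have "open (\<Union>B\<in>K. {x. (x, d, spow \<sigma> k m x) \<in> B})"
      by (intro open_UN) blast
    moreover have "{x. (x, d, spow \<sigma> k m x) \<in> \<Union>K} = (\<Union>B\<in>K. {x. (x, d, spow \<sigma> k m x) \<in> B})"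
      by blast
    ultimately show ?case
      by simp
  next
    case (Basis s)
    then obtain U V p q
      where s: "s = {(x, zdiff p q, y) | x y. x \<in> U \<and> y \<in> V \<and> spow \<sigma> k p x = spow \<sigma> k q y}"
        and UV: "open U" "open V"
      unfolding grpd_basis_def by blast
    have "{x. (x, d, spow \<sigma> k m x) \<in> s} = (if m + q = p then U \<inter> spow \<sigma> k m -` V else {})"
      using s by (auto simp: d_def zdiff_eq_iff spow_add')
    moreover have "open (U \<inter> spow \<sigma> k m -` V)"
      using continuous_on_spow_k[of m] UV by (simp add: continuous_on_open_vimage open_Int)
    ultimately show ?case
      by simp
  qed simp
  then show ?thesis
    by (simp add: d_def)
qed

lemma sg_cocycle_of_in_sgZ1:
  fixes \<phi> :: "'x \<times> (nat \<Rightarrow> int) \<times> 'x \<Rightarrow> 'h::topological_ab_group_add"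
  assumes \<phi>: "\<phi> \<in> grpdZ1 \<sigma> k"
  shows "sg_cocycle_of \<sigma> k \<phi> \<in> sgZ1 \<sigma> k"
proof -
  have "continuous_on UNIV (\<lambda>x. \<phi> (x, zdiff m 0, spow \<sigma> k m x))" if m: "m \<in> Nk k" for m
    unfolding continuous_on_open_invariant
  proof (intro allI impI)
    fix W :: "'h set"
    assume "open W"
    have "open {x. (x, zdiff m 0, spow \<sigma> k m x) \<in> grpd \<sigma> k \<inter> \<phi> -` W}"
      by (rule open_positive_slice[OF grpdZ1_open_vimage[OF \<phi> \<open>open W\<close>] m])
    moreover have "{x. (x, zdiff m 0, spow \<sigma> k m x) \<in> grpd \<sigma> k \<inter> \<phi> -` W}
        = (\<lambda>x. \<phi> (x, zdiff m 0, spow \<sigma> k m x)) -` W"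
      using grpd_positiveI[OF m] by auto
    ultimately show "\<exists>A. open A \<and> A \<inter> UNIV = (\<lambda>x. \<phi> (x, zdiff m 0, spow \<sigma> k m x)) -` W \<inter> UNIV"
      by auto
  qed
  moreover have "\<phi> (x, zdiff (m + n) 0, spow \<sigma> k (m + n) x)
      = \<phi> (x, zdiff m 0, spow \<sigma> k m x) + \<phi> (spow \<sigma> k m x, zdiff n 0, spow \<sigma> k n (spow \<sigma> k m x))"
    if "m \<in> Nk k" "n \<in> Nk k" for m n x
    using grpdZ1_mult[OF \<phi> grpd_positiveI grpd_positiveI, OF that]
    by (simp add: zdiff_add spow_add')
  ultimately show ?thesis
    unfolding sgZ1_def sg_cocycle_of_def by (auto simp: Nk_add fun_eq_iff)
qed

lemma Phi_sg_cocycle_of: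
  fixes \<phi> :: "'x \<times> (nat \<Rightarrow> int) \<times> 'x \<Rightarrow> 'h::topological_ab_group_add"
  assumes \<phi>: "\<phi> \<in> grpdZ1 \<sigma> k"
  shows "Phi \<sigma> k (sg_cocycle_of \<sigma> k \<phi>) = \<phi>"
proof
  fix t :: "'x \<times> (nat \<Rightarrow> int) \<times> 'x"
  obtain x g y where t: "t = (x, g, y)" by (cases t)
  show "Phi \<sigma> k (sg_cocycle_of \<sigma> k \<phi>) t = \<phi> t"
  proof (cases "t \<in> grpd \<sigma> k")
    case True
    then obtain m n where mn: "m \<in> Nk k" "n \<in> Nk k" "g = zdiff m n" "spow \<sigma> k m x = spow \<sigma> k n y"
      using t by (auto elim: grpdE)
    show ?thesis
      using Phi_eq[OF sg_cocycle_of_in_sgZ1[OF \<phi>] mn(1,2,4)] grpdZ1_diff[OF \<phi> mn(1,2,4)] mn t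
      by (simp add: sg_cocycle_of_def)
  qed (simp add: Phi_outside grpdZ1_outside[OF \<phi>])
qed

lemma grpdZ1_eq_Phi:
  fixes \<phi> :: "'x \<times> (nat \<Rightarrow> int) \<times> 'x \<Rightarrow> 'h::topological_ab_group_add"
  assumes \<phi>: "\<phi> \<in> grpdZ1 \<sigma> k" and c: "c \<in> sgZ1 \<sigma> k"
    and unit: "\<forall>i<k. \<forall>x. \<phi> (x, zdiff (unitvec i) 0, \<sigma> i x) = c (unitvec i) x"
  shows "\<phi> = Phi \<sigma> k c"
proof -
  have "sg_cocycle_of \<sigma> k \<phi> = c"
    using unit
    by (intro sgZ1_eq_if_eq_on_unitvec[OF sg_cocycle_of_in_sgZ1[OF \<phi>] c])
      (simp add: sg_cocycle_of_def unitvec_in_Nk spow_unitvec fun_eq_iff)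
  then show ?thesis
    using Phi_sg_cocycle_of[OF \<phi>] by simp
qed

lemma Phi_iso:
  "Phi \<sigma> k \<in> iso (sgZ1_grp \<sigma> k :: ((nat \<Rightarrow> nat) \<Rightarrow> 'x \<Rightarrow> 'h::topological_ab_group_add) monoid) (grpdZ1_grp \<sigma> k)"
proof -
  have "inj_on (Phi \<sigma> k) (sgZ1 \<sigma> k :: ((nat \<Rightarrow> nat) \<Rightarrow> 'x \<Rightarrow> 'h) set)"
    by (metis inj_onI sg_cocycle_of_Phi)
  moreover have "Phi \<sigma> k ` (sgZ1 \<sigma> k :: ((nat \<Rightarrow> nat) \<Rightarrow> 'x \<Rightarrow> 'h) set) = grpdZ1 \<sigma> k"
    using Phi_in_grpdZ1 Phi_sg_cocycle_of sg_cocycle_of_in_sgZ1 by (fastforce intro: rev_image_eqI)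
  ultimately show ?thesis
    unfolding iso_iff hom_def sgZ1_grp_def grpdZ1_grp_def
    using Phi_in_grpdZ1 Phi_add by auto
qed

end


subsection \<open>Coboundaries\<close>

definition sg_coboundary :: "(nat \<Rightarrow> 'x \<Rightarrow> 'x) \<Rightarrow> nat \<Rightarrow> ('x \<Rightarrow> 'h::ab_group_add) \<Rightarrow> (nat \<Rightarrow> nat) \<Rightarrow> 'x \<Rightarrow> 'h"
  where "sg_coboundary \<sigma> k \<alpha> = (\<lambda>n. if n \<in> Nk k then (\<lambda>x. \<alpha> x - \<alpha> (spow \<sigma> k n x)) else (\<lambda>x. 0))"

lemma sgB1_eq: "sgB1 \<sigma> k = {sg_coboundary \<sigma> k \<alpha> | \<alpha>. continuous_on UNIV \<alpha>}"
  by (simp add: sgB1_def sg_coboundary_def)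

context commuting_maps
begin

lemma sg_coboundary_in_sgZ1:
  fixes \<alpha> :: "'x \<Rightarrow> 'h::topological_ab_group_add"
  assumes \<alpha>: "continuous_on UNIV \<alpha>"
  shows "sg_coboundary \<sigma> k \<alpha> \<in> sgZ1 \<sigma> k"
proof -
  have "continuous_on UNIV (\<lambda>x. \<alpha> x - \<alpha> (spow \<sigma> k n x))" for n
    by (intro continuous_on_diff \<alpha> continuous_on_compose2[OF \<alpha> continuous_on_spow_k]) auto
  then show ?thesis
    unfolding sgZ1_def sg_coboundary_def by (auto simp: Nk_add spow_add' fun_eq_iff)
qed

lemma sgB1_subset_sgZ1: "(sgB1 \<sigma> k :: ((nat \<Rightarrow> nat) \<Rightarrow> 'x \<Rightarrow> 'h::topological_ab_group_add) set) \<subseteq> sgZ1 \<sigma> k"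
  unfolding sgB1_eq using sg_coboundary_in_sgZ1 by blast

lemma Phi_sg_coboundary:
  fixes \<alpha> :: "'x \<Rightarrow> 'h::topological_ab_group_add"
  assumes \<alpha>: "continuous_on UNIV \<alpha>"
  shows "Phi \<sigma> k (sg_coboundary \<sigma> k \<alpha>) = (\<lambda>(x, g, y). if (x, g, y) \<in> grpd \<sigma> k then \<alpha> x - \<alpha> y else 0)"
proof
  fix t :: "'x \<times> (nat \<Rightarrow> int) \<times> 'x"
  obtain x g y where t: "t = (x, g, y)" by (cases t)
  show "Phi \<sigma> k (sg_coboundary \<sigma> k \<alpha>) t = (\<lambda>(x, g, y). if (x, g, y) \<in> grpd \<sigma> k then \<alpha> x - \<alpha> y else 0) t"
  proof (cases "t \<in> grpd \<sigma> k")
    case True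
    then obtain m n where mn: "m \<in> Nk k" "n \<in> Nk k" "g = zdiff m n" "spow \<sigma> k m x = spow \<sigma> k n y"
      using t by (auto elim: grpdE)
    show ?thesis
      using Phi_eq[OF sg_coboundary_in_sgZ1[OF \<alpha>] mn(1,2,4)] mn t True
      by (simp add: sg_coboundary_def)
  qed (simp add: Phi_outside t)
qed

lemma Phi_image_sgB1:
  "Phi \<sigma> k ` (sgB1 \<sigma> k :: ((nat \<Rightarrow> nat) \<Rightarrow> 'x \<Rightarrow> 'h::topological_ab_group_add) set) = grpdB1 \<sigma> k"
proof -
  have "Phi \<sigma> k ` (sgB1 \<sigma> k :: ((nat \<Rightarrow> nat) \<Rightarrow> 'x \<Rightarrow> 'h) set)
      = (\<lambda>\<alpha>. Phi \<sigma> k (sg_coboundary \<sigma> k \<alpha>)) ` {\<alpha> :: 'x \<Rightarrow> 'h. continuous_on UNIV \<alpha>}"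
    unfolding sgB1_eq by blast
  also have "\<dots> = (\<lambda>\<alpha>. \<lambda>(x, g, y). if (x, g, y) \<in> grpd \<sigma> k then \<alpha> x - \<alpha> y else 0)
      ` {\<alpha> :: 'x \<Rightarrow> 'h. continuous_on UNIV \<alpha>}"
    by (rule image_cong) (simp_all add: Phi_sg_coboundary)
  also have "\<dots> = grpdB1 \<sigma> k"
    unfolding grpdB1_def by blast
  finally show ?thesis .
qed

end


subsection \<open>Quotients\<close>

lemma hom_image_set_mult:
  assumes h: "h \<in> hom G H" and "A \<subseteq> carrier G" "B \<subseteq> carrier G"
  shows "h ` (A <#>\<^bsub>G\<^esub> B) = h ` A <#>\<^bsub>H\<^esub> h ` B"
proof -
  have "h ` (A <#>\<^bsub>G\<^esub> B) = (\<Union>x\<in>A. \<Union>y\<in>B. {h (x \<otimes>\<^bsub>G\<^esub> y)})"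
    by (simp add: set_mult_def image_UN)
  also have "\<dots> = (\<Union>x\<in>A. \<Union>y\<in>B. {h x \<otimes>\<^bsub>H\<^esub> h y})"
    using assms by (auto simp: hom_mult subset_iff)
  also have "\<dots> = h ` A <#>\<^bsub>H\<^esub> h ` B"
    by (simp add: set_mult_def)
  finally show ?thesis .
qed

lemma hom_image_r_coset:
  assumes "h \<in> hom G H" "A \<subseteq> carrier G" "a \<in> carrier G"
  shows "h ` (A #>\<^bsub>G\<^esub> a) = h ` A #>\<^bsub>H\<^esub> h a"
  unfolding r_coset_def UNION_singleton_eq_range image_image
  using assms by (intro image_cong) (auto simp: hom_mult)

lemma iso_image_FactGroup:
  assumes G: "monoid G" and h: "h \<in> iso G H" and N: "N \<subseteq> carrier G"
  shows "(\<lambda>C. h ` C) \<in> iso (G Mod N) (H Mod h ` N)"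
proof -
  have hom: "h \<in> hom G H" and surj: "h ` carrier G = carrier H" and inj: "inj_on h (carrier G)"
    using h by (auto simp: iso_iff)
  have cosets: "C \<subseteq> carrier G" if "C \<in> carrier (G Mod N)" for C
    using that N monoid.r_coset_subset_G[OF G] by (auto simp: carrier_FactGroup)
  have "(\<lambda>C. h ` C) ` carrier (G Mod N) = (\<lambda>a. h ` (N #>\<^bsub>G\<^esub> a)) ` carrier G"
    by (simp add: carrier_FactGroup image_image)
  also have "\<dots> = (\<lambda>a. h ` N #>\<^bsub>H\<^esub> h a) ` carrier G"
    using hom_image_r_coset[OF hom N] by (rule image_cong[OF refl])
  also have "\<dots> = carrier (H Mod h ` N)"
    by (simp add: carrier_FactGroup surj flip: image_image[of "\<lambda>b. h ` N #>\<^bsub>H\<^esub> b" h])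
  finally have image: "(\<lambda>C. h ` C) ` carrier (G Mod N) = carrier (H Mod h ` N)" .
  have "(\<lambda>C. h ` C) \<in> hom (G Mod N) (H Mod h ` N)"
    using image hom_image_set_mult[OF hom cosets cosets] by (auto simp: hom_def FactGroup_def)
  moreover have "inj_on (\<lambda>C. h ` C) (carrier (G Mod N))"
    using inj_on_image_eq_iff[OF inj cosets cosets] by (auto intro: inj_onI)
  ultimately show ?thesis
    using image by (simp add: iso_iff)
qed

lemma (in commuting_maps) FactGroup_Phi_iso:
  "(\<lambda>C. Phi \<sigma> k ` C) \<in> iso ((sgZ1_grp \<sigma> k :: ((nat \<Rightarrow> nat) \<Rightarrow> 'x \<Rightarrow> 'h::topological_ab_group_add) monoid)
    Mod sgB1 \<sigma> k) (grpdZ1_grp \<sigma> k Mod grpdB1 \<sigma> k)"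
  using iso_image_FactGroup[OF monoid_sgZ1_grp Phi_iso, of "sgB1 \<sigma> k"] sgB1_subset_sgZ1
  by (simp add: Phi_image_sgB1 sgZ1_grp_def)

theorem corollary3p9:
  fixes \<sigma> :: "nat \<Rightarrow> 'x::metric_space \<Rightarrow> 'x"
    and k :: nat
  assumes H_lc: "locally_compact_space (euclidean :: 'h::{topological_ab_group_add,t2_space} topology)"
    and X_compact: "compact (UNIV :: 'x set)"
    and surj: "\<And>i. i < k \<Longrightarrow> surj (\<sigma> i)"
    and lh: "\<And>i. i < k \<Longrightarrow> local_homeo (\<sigma> i)"
    and comm: "\<And>i j. i < k \<Longrightarrow> j < k \<Longrightarrow> \<sigma> i \<circ> \<sigma> j = \<sigma> j \<circ> \<sigma> i"
  shows
    "(\<forall>c \<in> (sgZ1 \<sigma> k :: ((nat \<Rightarrow> nat) \<Rightarrow> 'x \<Rightarrow> 'h) set).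
        Phi \<sigma> k c \<in> grpdZ1 \<sigma> k
      \<and> (\<forall>x y m n. m \<in> Nk k \<longrightarrow> n \<in> Nk k \<longrightarrow> spow \<sigma> k m x = spow \<sigma> k n y \<longrightarrow>
            Phi \<sigma> k c (x, zdiff m n, y) = c m x - c n y)
      \<and> (\<forall>i<k. \<forall>x. Phi \<sigma> k c (x, zdiff (unitvec i) 0, \<sigma> i x) = c (unitvec i) x)
      \<and> (\<forall>\<phi> \<in> grpdZ1 \<sigma> k.
            (\<forall>i<k. \<forall>x. \<phi> (x, zdiff (unitvec i) 0, \<sigma> i x) = c (unitvec i) x)
            \<longrightarrow> \<phi> = Phi \<sigma> k c))
   \<and> Phi \<sigma> k \<in> iso (sgZ1_grp \<sigma> k :: ((nat \<Rightarrow> nat) \<Rightarrow> 'x \<Rightarrow> 'h) monoid) (grpdZ1_grp \<sigma> k)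
   \<and> Phi \<sigma> k ` (sgB1 \<sigma> k :: ((nat \<Rightarrow> nat) \<Rightarrow> 'x \<Rightarrow> 'h) set) = grpdB1 \<sigma> k
   \<and> (\<lambda>C. Phi \<sigma> k ` C) \<in> iso ((sgZ1_grp \<sigma> k :: ((nat \<Rightarrow> nat) \<Rightarrow> 'x \<Rightarrow> 'h) monoid) Mod sgB1 \<sigma> k)
                              (grpdZ1_grp \<sigma> k Mod grpdB1 \<sigma> k)"
proof -
  interpret commuting_maps \<sigma> k
    using comm lh by unfold_locales (auto simp: local_homeo_def)
  show ?thesis
  proof (intro conjI ballI allI impI Phi_iso Phi_image_sgB1 FactGroup_Phi_iso)
    fix c :: "(nat \<Rightarrow> nat) \<Rightarrow> 'x \<Rightarrow> 'h"
    assume c: "c \<in> sgZ1 \<sigma> k"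
    then show "Phi \<sigma> k c \<in> grpdZ1 \<sigma> k"
      by (rule Phi_in_grpdZ1)
    show "Phi \<sigma> k c (x, zdiff m n, y) = c m x - c n y"
      if "m \<in> Nk k" "n \<in> Nk k" "spow \<sigma> k m x = spow \<sigma> k n y" for x y m n
      using c that by (rule Phi_eq)
    show "Phi \<sigma> k c (x, zdiff (unitvec i) 0, \<sigma> i x) = c (unitvec i) x" if "i < k" for i x
      using c that by (rule Phi_unitvec)
    show "\<phi> = Phi \<sigma> k c"
      if "\<phi> \<in> grpdZ1 \<sigma> k" "\<forall>i<k. \<forall>x. \<phi> (x, zdiff (unitvec i) 0, \<sigma> i x) = c (unitvec i) x" for \<phi>
      using that(1) c that(2) by (rule grpdZ1_eq_Phi)
  qed
qed

end
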